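(* Let $F$ be an infinite field, $n=2$, and let $f=[z,a_1y_1,\dots,a_ny_n]$ and $g=[z,a'_1y_1,\dots,a'_my_m]$ be elements of $\mathcal{B}=\{[z,a_1y_1,\dots,a_ny_n]\mid n\ge1,\ a_i>0\}$. If $V_f\le V_g$, then $g\in\langle\{f\}\cup I\rangle_{T_{\mathbb{Z}_2}}$.
   Context: $UT_2(F)^{(-)}$ is the Lie algebra of $2\times2$ upper triangular matrices with bracket $[a,b]=ab-ba$ and canonical $\mathbb{Z}_2$-grading ($e_{11},e_{22}$ of degree $0$, $e_{12}$ of degree $1$); $I$ is its $T_{\mathbb{Z}_2}$-ideal of graded identities in the free Lie algebra on variables $y_i$ of degree $0$ and $z_i$ of degree $1$; $z$ is a variable of degree $1$. Commutators are left normed and $[z,a_1y_1,\dots,a_ny_n]$ denotes $[z,y_1,\dots,y_1,\dots,y_n,\dots,y_n]$ with $y_i$ repeated $a_i$ times. $\langle S\rangle_{T_{\mathbb{Z}_2}}$ is the $T_{\mathbb{Z}_2}$-ideal generated by $S$. For $f=[z,a_1y_1,\dots,a_ny_n]$ put $V_f=(a_1,\dots,a_n)$. For finite sequences of positive integers, $(a_1,\dots,a_n)\le(a'_1,\dots,a'_m)$ means there is a strictly increasing map $\varphi:\{1,\dots,n\}\to\{1,\dots,m\}$ with $a_i\le a'_{\varphi(i)}$ for all $i$. *)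

theory Defs
  imports "Jordan_Normal_Form.Matrix"
begin

text \<open>Graded variables: Y i has degree 0, Z i has degree 1.\<close>
datatype gvar = Y nat | Z nat

text \<open>Free associative algebra F<X>: noncommutative polynomials as coefficient
  functions on words. The free Lie algebra is realised (as usual) as the Lie
  subalgebra of F<X> generated by the variables.\<close>
type_synonym 'a ncpoly = "gvar list \<Rightarrow> 'a"

definition nc_one :: "'a::comm_ring_1 ncpoly" where
  "nc_one = (\<lambda>w. if w = [] then 1 else 0)"

definition nc_var :: "gvar \<Rightarrow> 'a::comm_ring_1 ncpoly" where
  "nc_var x = (\<lambda>w. if w = [x] then 1 else 0)"

definition nc_mul :: "'a::comm_ring_1 ncpoly \<Rightarrow> 'a ncpoly \<Rightarrow> 'a ncpoly" where
  "nc_mul p q = (\<lambda>w. \<Sum>i\<le>length w. p (take i w) * q (drop i w))"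

definition lie_br :: "'a::comm_ring_1 ncpoly \<Rightarrow> 'a ncpoly \<Rightarrow> 'a ncpoly" where
  "lie_br p q = (\<lambda>w. nc_mul p q w - nc_mul q p w)"

inductive_set lie_elems :: "'a::field ncpoly set" where
  var: "nc_var x \<in> lie_elems"
| add: "p \<in> lie_elems \<Longrightarrow> q \<in> lie_elems \<Longrightarrow> (\<lambda>w. p w + q w) \<in> lie_elems"
| smult: "p \<in> lie_elems \<Longrightarrow> (\<lambda>w. c * p w) \<in> lie_elems"
| br: "p \<in> lie_elems \<Longrightarrow> q \<in> lie_elems \<Longrightarrow> lie_br p q \<in> lie_elems"

definition zdeg :: "gvar list \<Rightarrow> nat" where
  "zdeg w = length (filter (\<lambda>x. case x of Z _ \<Rightarrow> True | Y _ \<Rightarrow> False) w)"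

definition hom_even :: "'a::field ncpoly \<Rightarrow> bool" where
  "hom_even p \<longleftrightarrow> (\<forall>w. p w \<noteq> 0 \<longrightarrow> even (zdeg w))"

definition hom_odd :: "'a::field ncpoly \<Rightarrow> bool" where
  "hom_odd p \<longleftrightarrow> (\<forall>w. p w \<noteq> 0 \<longrightarrow> odd (zdeg w))"

definition nc_subst :: "(gvar \<Rightarrow> 'a::field ncpoly) \<Rightarrow> 'a ncpoly \<Rightarrow> 'a ncpoly" where
  "nc_subst \<sigma> p = (\<lambda>w. \<Sum>u\<in>{u. p u \<noteq> 0}.
      p u * foldr (\<lambda>x acc. nc_mul (\<sigma> x) acc) u nc_one w)"

definition graded_subst :: "(gvar \<Rightarrow> 'a::field ncpoly) \<Rightarrow> bool" where
  "graded_subst \<sigma> \<longleftrightarrow> (\<forall>i. \<sigma> (Y i) \<in> lie_elems \<and> hom_even (\<sigma> (Y i))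
                          \<and> \<sigma> (Z i) \<in> lie_elems \<and> hom_odd (\<sigma> (Z i)))"

definition T_ideal :: "'a::field ncpoly set \<Rightarrow> bool" where
  "T_ideal J \<longleftrightarrow> J \<subseteq> lie_elems \<and> (\<lambda>w. 0) \<in> J
     \<and> (\<forall>p\<in>J. \<forall>q\<in>J. (\<lambda>w. p w + q w) \<in> J)
     \<and> (\<forall>p\<in>J. \<forall>c. (\<lambda>w. c * p w) \<in> J)
     \<and> (\<forall>p\<in>J. \<forall>q\<in>lie_elems. lie_br p q \<in> J)
     \<and> (\<forall>p\<in>J. \<forall>\<sigma>. graded_subst \<sigma> \<longrightarrow> nc_subst \<sigma> p \<in> J)"

definition T_ideal_gen :: "'a::field ncpoly set \<Rightarrow> 'a ncpoly set" where
  "T_ideal_gen S = \<Inter>{J. T_ideal J \<and> S \<subseteq> J}"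

definition graded_UT2_eval :: "(gvar \<Rightarrow> 'a::field mat) \<Rightarrow> bool" where
  "graded_UT2_eval \<phi> \<longleftrightarrow> (\<forall>i.
      \<phi> (Y i) \<in> carrier_mat 2 2 \<and> \<phi> (Y i) $$ (0,1) = 0 \<and> \<phi> (Y i) $$ (1,0) = 0
    \<and> \<phi> (Z i) \<in> carrier_mat 2 2 \<and> \<phi> (Z i) $$ (0,0) = 0 \<and> \<phi> (Z i) $$ (1,0) = 0
    \<and> \<phi> (Z i) $$ (1,1) = 0)"

text \<open>Entry (i,j) of the evaluation of p (the Lie bracket of UT_2^(-) is ab-ba,
  so evaluating the Lie element inside the associative algebra is correct).\<close>
definition eval_UT2 :: "(gvar \<Rightarrow> 'a::field mat) \<Rightarrow> 'a ncpoly \<Rightarrow> nat \<Rightarrow> nat \<Rightarrow> 'a" where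
  "eval_UT2 \<phi> p i j = (\<Sum>u\<in>{u. p u \<noteq> 0}.
      p u * (foldr (\<lambda>x acc. \<phi> x * acc) u (1\<^sub>m 2)) $$ (i,j))"

definition UT2_ids :: "'a::field ncpoly set" where
  "UT2_ids = {p \<in> lie_elems. \<forall>\<phi>. graded_UT2_eval \<phi> \<longrightarrow>
                 (\<forall>i<2. \<forall>j<2. eval_UT2 \<phi> p i j = 0)}"

text \<open>[z, a_1 y_1, ..., a_n y_n] with as = [a_1,...,a_n]; z = Z 0, y_k = Y (k-1).\<close>
definition comm_B :: "nat list \<Rightarrow> 'a::field ncpoly" where
  "comm_B as = foldl (\<lambda>p x. lie_br p (nc_var x)) (nc_var (Z 0))
      (concat (map (\<lambda>k. replicate (as ! k) (Y k)) [0..<length as]))"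

definition in_B_seq :: "nat list \<Rightarrow> bool" where
  "in_B_seq as \<longleftrightarrow> as \<noteq> [] \<and> (\<forall>a\<in>set as. 0 < a)"

definition seq_le :: "nat list \<Rightarrow> nat list \<Rightarrow> bool" where
  "seq_le as bs \<longleftrightarrow> (\<exists>\<phi>::nat \<Rightarrow> nat. strict_mono_on {..<length as} \<phi> \<and>
      (\<forall>i<length as. \<phi> i < length bs \<and> as ! i \<le> bs ! (\<phi> i)))"

end

theory Submission
  imports Defs "HOL-Library.Multiset"
begin

text \<open>Let \<psi> be the strictly increasing map witnessing V_f \<le> V_g. The renaming
  y_k \<mapsto> y_{\<psi> k} is a graded substitution, so it maps f to
  [z, a_1 y_{\<psi> 1}, ..., a_n y_{\<psi> n}] inside the T-ideal, and bracketing further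
  with the missing y's gives a commutator whose y's form the same multiset as those
  of g. In UT_2 a commutator [z, x_1, ..., x_r] with all x_i even evaluates to
  z_{12} \<prod> (x_i_{22} - x_i_{11}), independently of the order of the x_i, so this
  commutator agrees with g modulo I.\<close>

abbreviation finite_support :: "'a::comm_ring_1 ncpoly \<Rightarrow> bool" where
  "finite_support p \<equiv> finite {u. p u \<noteq> 0}"

definition nc_word :: "gvar list \<Rightarrow> 'a::comm_ring_1 ncpoly" where
  "nc_word u = (\<lambda>w. if w = u then 1 else 0)"

text \<open>Renaming substitutions and evaluations into UT_2 are both of the form lin_ext F,
  for a function F on words that is multiplicative with respect to concatenation.\<close>
definition lin_ext :: "(gvar list \<Rightarrow> 'a::comm_ring_1) \<Rightarrow> 'a ncpoly \<Rightarrow> 'a" where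
  "lin_ext F p = (\<Sum>u\<in>{u. p u \<noteq> 0}. p u * F u)"

lemma lin_ext_superset:
  "finite A \<Longrightarrow> {u. p u \<noteq> 0} \<subseteq> A \<Longrightarrow> lin_ext F p = (\<Sum>u\<in>A. p u * F u)"
  unfolding lin_ext_def by (rule sum.mono_neutral_left) auto

lemma lin_ext_linear:
  assumes "finite_support p" "finite_support q"
  shows "lin_ext F (\<lambda>w. a * p w + b * q w) = a * lin_ext F p + b * lin_ext F q"
proof -
  let ?A = "{u. p u \<noteq> 0} \<union> {u. q u \<noteq> 0}"
  have fin: "finite ?A" using assms by auto
  have "lin_ext F (\<lambda>w. a * p w + b * q w) = (\<Sum>u\<in>?A. (a * p u + b * q u) * F u)"
    by (rule lin_ext_superset[OF fin]) auto
  also have "\<dots> = a * (\<Sum>u\<in>?A. p u * F u) + b * (\<Sum>u\<in>?A. q u * F u)"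
    by (simp add: sum_distrib_left sum.distrib algebra_simps)
  also have "\<dots> = a * lin_ext F p + b * lin_ext F q"
    using lin_ext_superset[OF fin, of p F] lin_ext_superset[OF fin, of q F] by auto
  finally show ?thesis .
qed

lemma lin_ext_diff:
  "finite_support p \<Longrightarrow> finite_support q \<Longrightarrow>
    lin_ext F (\<lambda>w. p w - q w) = lin_ext F p - lin_ext F q"
  using lin_ext_linear[of p q F 1 "-1"] by simp

lemma support_nc_word: "{w. nc_word u w \<noteq> (0::'a::comm_ring_1)} = {u}"
  by (auto simp: nc_word_def)

lemma lin_ext_nc_word: "lin_ext F (nc_word u) = F u"
  by (simp add: lin_ext_def support_nc_word) (simp add: nc_word_def)

lemma nc_var_eq_nc_word: "nc_var x = nc_word [x]"
  by (simp add: nc_var_def nc_word_def fun_eq_iff)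

lemma nc_one_eq_nc_word: "nc_one = nc_word []"
  by (simp add: nc_one_def nc_word_def fun_eq_iff)

lemma sum_split_points_eq:
  "(\<Sum>i\<le>length t. if take i t = u \<and> drop i t = v then c else 0) = (if u @ v = t then c else 0)"
proof -
  have split_iff: "(take i t = u \<and> drop i t = v) \<longleftrightarrow> (i = length u \<and> u @ v = t)"
    if "i \<le> length t" for i
    using that by auto
  have "(\<Sum>i\<le>length t. if take i t = u \<and> drop i t = v then c else 0)
      = (\<Sum>i\<le>length t. if i = length u then (if u @ v = t then c else 0) else 0)"
    by (rule sum.cong) (auto simp: split_iff)
  also have "\<dots> = (if u @ v = t then c else 0)"
    by (subst sum.delta) auto
  finally show ?thesis .
qed

lemma nc_mul_nc_word: "nc_mul (nc_word u) (nc_word v) = (nc_word (u @ v) :: 'a::comm_ring_1 ncpoly)"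
proof
  fix t
  have "(nc_mul (nc_word u) (nc_word v) t :: 'a)
      = (\<Sum>i\<le>length t. if take i t = u \<and> drop i t = v then 1 else 0)"
    unfolding nc_mul_def nc_word_def by (rule sum.cong) auto
  then show "(nc_mul (nc_word u) (nc_word v) t :: 'a) = nc_word (u @ v) t"
    by (simp add: sum_split_points_eq nc_word_def)
qed

lemma nc_mul_eq_sum_pairs:
  assumes "finite A" "finite B" "{u. p u \<noteq> 0} \<subseteq> A" "{u. q u \<noteq> 0} \<subseteq> B"
  shows "nc_mul p q w = (\<Sum>x\<in>A \<times> B. if fst x @ snd x = w then p (fst x) * q (snd x) else 0)"
proof -
  have term_eq: "p (take i w) * q (drop i w)
      = (\<Sum>x\<in>A \<times> B. if take i w = fst x \<and> drop i w = snd x then p (fst x) * q (snd x) else 0)"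
    for i
  proof -
    have "(\<Sum>x\<in>A \<times> B. if take i w = fst x \<and> drop i w = snd x then p (fst x) * q (snd x) else 0)
       = (\<Sum>x\<in>A \<times> B. if x = (take i w, drop i w) then p (fst x) * q (snd x) else 0)"
      by (rule sum.cong) auto
    also have "\<dots> = (if (take i w, drop i w) \<in> A \<times> B then p (take i w) * q (drop i w) else 0)"
      using assms by (subst sum.delta) auto
    also have "\<dots> = p (take i w) * q (drop i w)"
      using assms(3,4) by (auto simp: subset_iff) (metis mult_zero_left mult_zero_right)+
    finally show ?thesis by simp
  qed
  have "nc_mul p q w = (\<Sum>i\<le>length w. \<Sum>x\<in>A \<times> B.
      if take i w = fst x \<and> drop i w = snd x then p (fst x) * q (snd x) else 0)"
    unfolding nc_mul_def term_eq ..
  also have "\<dots> = (\<Sum>x\<in>A \<times> B. \<Sum>i\<le>length w.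
      if take i w = fst x \<and> drop i w = snd x then p (fst x) * q (snd x) else 0)"
    by (rule sum.swap)
  also have "\<dots> = (\<Sum>x\<in>A \<times> B. if fst x @ snd x = w then p (fst x) * q (snd x) else 0)"
    by (simp only: sum_split_points_eq)
  finally show ?thesis .
qed

lemma support_nc_mul_subset:
  assumes "finite_support p" "finite_support q"
  shows "{w. nc_mul p q w \<noteq> 0} \<subseteq> (\<lambda>x. fst x @ snd x) ` ({u. p u \<noteq> 0} \<times> {u. q u \<noteq> 0})"
proof
  fix w assume "w \<in> {w. nc_mul p q w \<noteq> 0}"
  then have "(\<Sum>x\<in>{u. p u \<noteq> 0} \<times> {u. q u \<noteq> 0}.
      if fst x @ snd x = w then p (fst x) * q (snd x) else 0) \<noteq> 0"
    by (simp only: nc_mul_eq_sum_pairs[OF assms order_refl order_refl, symmetric]) simp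
  then obtain x where "x \<in> {u. p u \<noteq> 0} \<times> {u. q u \<noteq> 0}"
      and "(if fst x @ snd x = w then p (fst x) * q (snd x) else 0) \<noteq> 0"
    by (rule sum.not_neutral_contains_not_neutral)
  then have "x \<in> {u. p u \<noteq> 0} \<times> {u. q u \<noteq> 0}" "fst x @ snd x = w"
    by (auto split: if_splits)
  then show "w \<in> (\<lambda>x. fst x @ snd x) ` ({u. p u \<noteq> 0} \<times> {u. q u \<noteq> 0})" by blast
qed

lemma finite_support_nc_mul:
  "finite_support p \<Longrightarrow> finite_support q \<Longrightarrow> finite_support (nc_mul p q)"
  by (rule finite_subset[OF support_nc_mul_subset]) auto

lemma finite_support_add: "finite_support p \<Longrightarrow> finite_support q \<Longrightarrow> finite_support (\<lambda>w. p w + q w)"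
  by (rule finite_subset[of _ "{u. p u \<noteq> 0} \<union> {u. q u \<noteq> 0}"]) auto

lemma finite_support_diff: "finite_support p \<Longrightarrow> finite_support q \<Longrightarrow> finite_support (\<lambda>w. p w - q w)"
  by (rule finite_subset[of _ "{u. p u \<noteq> 0} \<union> {u. q u \<noteq> 0}"]) auto

lemma finite_support_smult: "finite_support p \<Longrightarrow> finite_support (\<lambda>w. c * p w)"
  by (rule finite_subset[of _ "{u. p u \<noteq> 0}"]) auto

lemma finite_support_nc_word: "finite_support (nc_word u :: 'a::comm_ring_1 ncpoly)"
  by (simp add: support_nc_word)

lemma finite_support_nc_var: "finite_support (nc_var x :: 'a::comm_ring_1 ncpoly)"
  by (simp add: nc_var_eq_nc_word finite_support_nc_word)

lemma finite_support_lie_br: "finite_support p \<Longrightarrow> finite_support q \<Longrightarrow> finite_support (lie_br p q)"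
  unfolding lie_br_def by (intro finite_support_diff finite_support_nc_mul)

lemma lie_elems_finite_support: "p \<in> lie_elems \<Longrightarrow> finite_support p"
  by (induction rule: lie_elems.induct)
    (auto simp: finite_support_nc_var finite_support_add finite_support_smult finite_support_lie_br)

lemma lie_elems_diff: "p \<in> lie_elems \<Longrightarrow> q \<in> lie_elems \<Longrightarrow> (\<lambda>w. p w - q w) \<in> lie_elems"
  using lie_elems.add[OF _ lie_elems.smult[of q "-1"], of p] by simp

lemma lin_ext_nc_mul:
  assumes "finite_support p" "finite_support q"
  shows "lin_ext F (nc_mul p q) = (\<Sum>u\<in>{u. p u \<noteq> 0}. \<Sum>v\<in>{u. q u \<noteq> 0}. p u * q v * F (u @ v))"
proof -
  let ?A = "{u. p u \<noteq> 0}" and ?B = "{u. q u \<noteq> 0}"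
  let ?C = "(\<lambda>x. fst x @ snd x) ` (?A \<times> ?B)"
  have fin: "finite ?C" using assms by auto
  have "lin_ext F (nc_mul p q) = (\<Sum>w\<in>?C. nc_mul p q w * F w)"
    by (rule lin_ext_superset[OF fin support_nc_mul_subset[OF assms]])
  also have "\<dots> = (\<Sum>w\<in>?C. \<Sum>x\<in>?A \<times> ?B. if fst x @ snd x = w then p (fst x) * q (snd x) * F w else 0)"
    by (intro sum.cong refl)
      (simp add: nc_mul_eq_sum_pairs[OF assms order_refl order_refl] sum_distrib_right,
        intro sum.cong refl, simp)
  also have "\<dots> = (\<Sum>x\<in>?A \<times> ?B. \<Sum>w\<in>?C. if w = fst x @ snd x then p (fst x) * q (snd x) * F w else 0)"
    by (subst sum.swap) (intro sum.cong refl, auto)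
  also have "\<dots> = (\<Sum>x\<in>?A \<times> ?B. p (fst x) * q (snd x) * F (fst x @ snd x))"
    using fin by (intro sum.cong) (auto simp: sum.delta')
  also have "\<dots> = (\<Sum>u\<in>?A. \<Sum>v\<in>?B. p u * q v * F (u @ v))"
    by (simp add: sum.cartesian_product split_def)
  finally show ?thesis .
qed

definition left_normed :: "gvar \<Rightarrow> gvar list \<Rightarrow> 'a::comm_ring_1 ncpoly" where
  "left_normed z xs = foldl (\<lambda>p x. lie_br p (nc_var x)) (nc_var z) xs"

lemma left_normed_snoc: "left_normed z (xs @ [x]) = lie_br (left_normed z xs) (nc_var x)"
  by (simp add: left_normed_def)

lemma left_normed_append:
  "left_normed z (xs @ ys) = foldl (\<lambda>p x. lie_br p (nc_var x)) (left_normed z xs) ys"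
  by (simp add: left_normed_def)

lemma left_normed_lie_elems: "(left_normed z xs :: 'a::field ncpoly) \<in> lie_elems"
  by (induction xs rule: rev_induct)
    (auto simp: left_normed_snoc left_normed_def intro: lie_elems.intros)

lemma finite_support_left_normed: "finite_support (left_normed z xs :: 'a::field ncpoly)"
  by (rule lie_elems_finite_support[OF left_normed_lie_elems])

lemma nc_subst_renaming:
  "nc_subst (\<lambda>x. nc_var (\<rho> x)) p = (\<lambda>t. lin_ext (\<lambda>u. nc_word (map \<rho> u) t) p)"
proof -
  have "foldr (\<lambda>x acc. nc_mul (nc_var (\<rho> x)) acc) u nc_one = (nc_word (map \<rho> u) :: 'a ncpoly)" for u
    by (induction u) (simp_all add: nc_one_eq_nc_word nc_var_eq_nc_word nc_mul_nc_word)
  then show ?thesis unfolding nc_subst_def lin_ext_def by simp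
qed

lemma nc_subst_renaming_diff:
  "finite_support p \<Longrightarrow> finite_support q \<Longrightarrow>
    nc_subst (\<lambda>x. nc_var (\<rho> x)) (\<lambda>w. p w - q w)
      = (\<lambda>t. nc_subst (\<lambda>x. nc_var (\<rho> x)) p t - nc_subst (\<lambda>x. nc_var (\<rho> x)) q t)"
  unfolding nc_subst_renaming by (simp add: lin_ext_diff)

lemma nc_subst_renaming_nc_mul:
  fixes p q :: "'a::field ncpoly"
  assumes "finite_support p" "finite_support q"
  shows "nc_subst (\<lambda>x. nc_var (\<rho> x)) (nc_mul p q)
       = nc_mul (nc_subst (\<lambda>x. nc_var (\<rho> x)) p) (nc_subst (\<lambda>x. nc_var (\<rho> x)) q)"
proof
  fix t
  let ?A = "{u. p u \<noteq> 0}" and ?B = "{u. q u \<noteq> 0}"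
  have "nc_subst (\<lambda>x. nc_var (\<rho> x)) (nc_mul p q) t
      = (\<Sum>u\<in>?A. \<Sum>v\<in>?B. if map \<rho> u @ map \<rho> v = t then p u * q v else 0)"
    unfolding nc_subst_renaming lin_ext_nc_mul[OF assms]
    by (intro sum.cong refl) (auto simp: nc_word_def)
  also have "\<dots> = (\<Sum>u\<in>?A. \<Sum>v\<in>?B. \<Sum>i\<le>length t.
      if take i t = map \<rho> u \<and> drop i t = map \<rho> v then p u * q v else 0)"
    by (simp only: sum_split_points_eq)
  also have "\<dots> = (\<Sum>i\<le>length t. \<Sum>u\<in>?A. \<Sum>v\<in>?B.
      if take i t = map \<rho> u \<and> drop i t = map \<rho> v then p u * q v else 0)"
    by (subst sum.swap) (subst (2) sum.swap, rule refl)
  also have "\<dots> = (\<Sum>i\<le>length t. (\<Sum>u\<in>?A. p u * nc_word (map \<rho> u) (take i t))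
      * (\<Sum>v\<in>?B. q v * nc_word (map \<rho> v) (drop i t)))"
    by (intro sum.cong refl) (auto simp: sum_product nc_word_def intro!: sum.cong)
  also have "\<dots> = nc_mul (nc_subst (\<lambda>x. nc_var (\<rho> x)) p) (nc_subst (\<lambda>x. nc_var (\<rho> x)) q) t"
    unfolding nc_subst_renaming nc_mul_def lin_ext_def by simp
  finally show "nc_subst (\<lambda>x. nc_var (\<rho> x)) (nc_mul p q) t
       = nc_mul (nc_subst (\<lambda>x. nc_var (\<rho> x)) p) (nc_subst (\<lambda>x. nc_var (\<rho> x)) q) t" .
qed

lemma nc_subst_renaming_lie_br:
  fixes p q :: "'a::field ncpoly"
  assumes "finite_support p" "finite_support q"
  shows "nc_subst (\<lambda>x. nc_var (\<rho> x)) (lie_br p q)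
       = lie_br (nc_subst (\<lambda>x. nc_var (\<rho> x)) p) (nc_subst (\<lambda>x. nc_var (\<rho> x)) q)"
  unfolding lie_br_def
  by (simp add: nc_subst_renaming_diff finite_support_nc_mul assms nc_subst_renaming_nc_mul)

lemma nc_subst_renaming_nc_var:
  "nc_subst (\<lambda>x. nc_var (\<rho> x)) (nc_var y) = (nc_var (\<rho> y) :: 'a::field ncpoly)"
  unfolding nc_subst_renaming by (simp add: nc_var_eq_nc_word lin_ext_nc_word)

lemma nc_subst_renaming_left_normed:
  "nc_subst (\<lambda>x. nc_var (\<rho> x)) (left_normed z xs) = (left_normed (\<rho> z) (map \<rho> xs) :: 'a::field ncpoly)"
proof (induction xs rule: rev_induct)
  case Nil
  then show ?case by (simp add: left_normed_def nc_subst_renaming_nc_var)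
next
  case (snoc x xs)
  then show ?case
    by (simp add: left_normed_snoc nc_subst_renaming_lie_br finite_support_left_normed
        finite_support_nc_var nc_subst_renaming_nc_var)
qed

lemma T_ideal_add_closed: "T_ideal J \<Longrightarrow> p \<in> J \<Longrightarrow> q \<in> J \<Longrightarrow> (\<lambda>w. p w + q w) \<in> J"
  by (simp add: T_ideal_def)

lemma T_ideal_lie_br_closed: "T_ideal J \<Longrightarrow> p \<in> J \<Longrightarrow> q \<in> lie_elems \<Longrightarrow> lie_br p q \<in> J"
  by (simp add: T_ideal_def)

lemma T_ideal_subst_closed: "T_ideal J \<Longrightarrow> p \<in> J \<Longrightarrow> graded_subst \<sigma> \<Longrightarrow> nc_subst \<sigma> p \<in> J"
  by (simp add: T_ideal_def)

lemma T_ideal_renaming: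
  fixes J :: "'a::field ncpoly set"
  assumes "T_ideal J" "p \<in> J"
    and "\<And>k. \<exists>k'. \<rho> (Y k) = Y k'" and "\<And>k. \<exists>k'. \<rho> (Z k) = Z k'"
  shows "nc_subst (\<lambda>x. nc_var (\<rho> x)) p \<in> J"
proof (rule T_ideal_subst_closed[OF assms(1,2)])
  show "graded_subst (\<lambda>x. (nc_var (\<rho> x) :: 'a ncpoly))"
    unfolding graded_subst_def
  proof (intro allI conjI lie_elems.var)
    fix i
    obtain k where "\<rho> (Y i) = Y k" using assms(3) by blast
    then show "hom_even (nc_var (\<rho> (Y i)) :: 'a ncpoly)"
      by (simp add: hom_even_def nc_var_def zdeg_def)
    obtain l where "\<rho> (Z i) = Z l" using assms(4) by blast
    then show "hom_odd (nc_var (\<rho> (Z i)) :: 'a ncpoly)"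
      by (simp add: hom_odd_def nc_var_def zdeg_def)
  qed
qed

lemma T_ideal_foldl_lie_br:
  assumes "T_ideal J" "p \<in> J"
  shows "foldl (\<lambda>p x. lie_br p (nc_var x)) p ys \<in> J"
  using assms(2)
proof (induction ys arbitrary: p)
  case (Cons y ys)
  then show ?case
    using T_ideal_lie_br_closed[OF assms(1) Cons.prems lie_elems.var] by simp
qed simp

definition word_mat :: "(gvar \<Rightarrow> 'a::field mat) \<Rightarrow> gvar list \<Rightarrow> 'a mat" where
  "word_mat \<phi> u = foldr (\<lambda>x acc. \<phi> x * acc) u (1\<^sub>m 2)"

lemma eval_UT2_eq_lin_ext: "eval_UT2 \<phi> p i j = lin_ext (\<lambda>u. word_mat \<phi> u $$ (i,j)) p"
  by (simp add: eval_UT2_def lin_ext_def word_mat_def)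

lemma graded_UT2_eval_carrier: "graded_UT2_eval \<phi> \<Longrightarrow> \<phi> x \<in> carrier_mat 2 2"
  by (cases x) (auto simp: graded_UT2_eval_def)

lemma word_mat_carrier: "graded_UT2_eval \<phi> \<Longrightarrow> word_mat \<phi> u \<in> carrier_mat 2 2"
  by (induction u) (auto simp: word_mat_def intro!: mult_carrier_mat[OF graded_UT2_eval_carrier])

lemma word_mat_append:
  assumes "graded_UT2_eval \<phi>"
  shows "word_mat \<phi> (u @ v) = word_mat \<phi> u * word_mat \<phi> v"
proof (induction u)
  case Nil
  then show ?case using word_mat_carrier[OF assms, of v] by (simp add: word_mat_def)
next
  case (Cons x u)
  have "word_mat \<phi> ((x # u) @ v) = \<phi> x * (word_mat \<phi> u * word_mat \<phi> v)"
    using Cons by (simp add: word_mat_def)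
  also have "\<dots> = (\<phi> x * word_mat \<phi> u) * word_mat \<phi> v"
    using graded_UT2_eval_carrier[OF assms] word_mat_carrier[OF assms] by (metis assoc_mult_mat)
  finally show ?case by (simp add: word_mat_def)
qed

lemma mult_mat_2_entry:
  fixes A B :: "'a::comm_ring_1 mat"
  assumes "A \<in> carrier_mat 2 2" "B \<in> carrier_mat 2 2" "i < 2" "j < 2"
  shows "(A * B) $$ (i,j) = A $$ (i,0) * B $$ (0,j) + A $$ (i,1) * B $$ (1,j)"
  using assms by (simp add: scalar_prod_def numeral_2_eq_2)

lemma eval_UT2_nc_mul:
  fixes p q :: "'a::field ncpoly"
  assumes \<phi>: "graded_UT2_eval \<phi>" and fin: "finite_support p" "finite_support q"
    and ij: "i < 2" "j < 2"
  shows "eval_UT2 \<phi> (nc_mul p q) i j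
       = eval_UT2 \<phi> p i 0 * eval_UT2 \<phi> q 0 j + eval_UT2 \<phi> p i 1 * eval_UT2 \<phi> q 1 j"
proof -
  let ?A = "{u. p u \<noteq> 0}" and ?B = "{u. q u \<noteq> 0}" and ?M = "word_mat \<phi>"
  have "eval_UT2 \<phi> (nc_mul p q) i j = (\<Sum>u\<in>?A. \<Sum>v\<in>?B. p u * q v * ?M (u @ v) $$ (i,j))"
    unfolding eval_UT2_eq_lin_ext by (rule lin_ext_nc_mul[OF fin])
  also have "\<dots> = (\<Sum>u\<in>?A. \<Sum>v\<in>?B. (p u * ?M u $$ (i,0)) * (q v * ?M v $$ (0,j))
                     + (p u * ?M u $$ (i,1)) * (q v * ?M v $$ (1,j)))"
    by (intro sum.cong refl)
      (simp add: word_mat_append[OF \<phi>] mult_mat_2_entry[OF word_mat_carrier[OF \<phi>]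
          word_mat_carrier[OF \<phi>] ij] algebra_simps)
  also have "\<dots> = (\<Sum>u\<in>?A. p u * ?M u $$ (i,0)) * (\<Sum>v\<in>?B. q v * ?M v $$ (0,j))
               + (\<Sum>u\<in>?A. p u * ?M u $$ (i,1)) * (\<Sum>v\<in>?B. q v * ?M v $$ (1,j))"
    by (simp add: sum_product sum.distrib)
  finally show ?thesis by (simp add: eval_UT2_eq_lin_ext lin_ext_def)
qed

lemma eval_UT2_diff:
  "finite_support p \<Longrightarrow> finite_support q \<Longrightarrow>
    eval_UT2 \<phi> (\<lambda>w. p w - q w) i j = eval_UT2 \<phi> p i j - eval_UT2 \<phi> q i j"
  by (simp add: eval_UT2_eq_lin_ext lin_ext_diff)

lemma eval_UT2_nc_var: "graded_UT2_eval \<phi> \<Longrightarrow> eval_UT2 \<phi> (nc_var x) i j = \<phi> x $$ (i,j)"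
  unfolding eval_UT2_eq_lin_ext nc_var_eq_nc_word lin_ext_nc_word
  using graded_UT2_eval_carrier[of \<phi> x] by (simp add: word_mat_def)

text \<open>Even variables act diagonally and z strictly upper triangularly, so only the
  (1,2) entry survives and every bracket [-, y] multiplies it by y_{22} - y_{11}.\<close>
lemma eval_UT2_left_normed:
  fixes \<phi> :: "gvar \<Rightarrow> 'a::field mat"
  assumes \<phi>: "graded_UT2_eval \<phi>" and ys: "\<forall>x\<in>set xs. \<exists>k. x = Y k" and ij: "i < 2" "j < 2"
  shows "eval_UT2 \<phi> (left_normed (Z l) xs) i j
    = (if i = 0 \<and> j = 1
       then \<phi> (Z l) $$ (0,1) * prod_list (map (\<lambda>y. \<phi> y $$ (1,1) - \<phi> y $$ (0,0)) xs) else 0)"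
  using ys ij
proof (induction xs arbitrary: i j rule: rev_induct)
  case Nil
  then show ?case
    using \<phi> less_2_cases[of i] less_2_cases[of j]
    by (auto simp: left_normed_def eval_UT2_nc_var graded_UT2_eval_def)
next
  case (snoc x xs)
  obtain k where x: "x = Y k" using snoc.prems by auto
  have diag: "\<phi> (Y k) $$ (0,Suc 0) = 0" "\<phi> (Y k) $$ (Suc 0,0) = 0"
    using \<phi> by (auto simp: graded_UT2_eval_def)
  let ?P = "left_normed (Z l) xs :: 'a ncpoly"
  have "eval_UT2 \<phi> (left_normed (Z l) (xs @ [x])) i j
     = (eval_UT2 \<phi> ?P i 0 * \<phi> x $$ (0,j) + eval_UT2 \<phi> ?P i 1 * \<phi> x $$ (1,j))
       - (\<phi> x $$ (i,0) * eval_UT2 \<phi> ?P 0 j + \<phi> x $$ (i,1) * eval_UT2 \<phi> ?P 1 j)"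
    using snoc.prems
    by (simp add: left_normed_snoc lie_br_def eval_UT2_diff eval_UT2_nc_mul[OF \<phi>]
        finite_support_nc_mul finite_support_left_normed finite_support_nc_var eval_UT2_nc_var[OF \<phi>])
  then show ?case
    using snoc less_2_cases[of i] less_2_cases[of j] by (auto simp: diag x algebra_simps)
qed

lemma left_normed_perm_diff_in_UT2_ids:
  assumes perm: "mset xs = mset ys" and Ys: "\<forall>x\<in>set xs. \<exists>k. x = Y k"
  shows "(\<lambda>w. left_normed (Z l) xs w - left_normed (Z l) ys w) \<in> (UT2_ids :: 'a::field ncpoly set)"
  unfolding UT2_ids_def
proof (intro CollectI conjI allI impI)
  show "(\<lambda>w. left_normed (Z l) xs w - left_normed (Z l) ys w) \<in> (lie_elems :: 'a ncpoly set)"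
    by (intro lie_elems_diff left_normed_lie_elems)
  fix \<phi> :: "gvar \<Rightarrow> 'a mat" and i j :: nat
  assume \<phi>: "graded_UT2_eval \<phi>" and ij: "i < 2" "j < 2"
  have "set ys = set xs" using perm by (metis set_mset_mset)
  then have Ys': "\<forall>x\<in>set ys. \<exists>k. x = Y k" using Ys by simp
  have "prod_list (map f xs) = prod_list (map f ys)" for f :: "gvar \<Rightarrow> 'a"
    by (metis perm mset_map prod_mset_prod_list)
  then show "eval_UT2 \<phi> (\<lambda>w. left_normed (Z l) xs w - left_normed (Z l) ys w) i j = 0"
    by (simp add: eval_UT2_diff finite_support_left_normed
        eval_UT2_left_normed[OF \<phi> Ys ij] eval_UT2_left_normed[OF \<phi> Ys' ij])
qed

definition y_word :: "nat list \<Rightarrow> gvar list" where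
  "y_word as = concat (map (\<lambda>k. replicate (as ! k) (Y k)) [0..<length as])"

lemma comm_B_eq_left_normed: "comm_B as = left_normed (Z 0) (y_word as)"
  by (simp add: comm_B_def left_normed_def y_word_def)

lemma y_word_only_Y: "\<forall>x\<in>set (y_word as). \<exists>k. x = Y k"
  by (auto simp: y_word_def)

definition rename_Y :: "(nat \<Rightarrow> nat) \<Rightarrow> gvar \<Rightarrow> gvar" where
  "rename_Y \<psi> x = (case x of Y k \<Rightarrow> Y (\<psi> k) | Z k \<Rightarrow> Z k)"

lemma rename_Y_Z [simp]: "rename_Y \<psi> (Z k) = Z k"
  by (simp add: rename_Y_def)

lemma count_mset_concat_replicate:
  "count (mset (concat (map (\<lambda>k. replicate (c k) (v k)) [0..<n]))) x
    = (\<Sum>k<n. if v k = x then c k else 0)"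
  by (induction n) auto

lemma seq_le_imp_renamed_y_word_subseteq:
  assumes "seq_le as bs"
  obtains \<psi> where "mset (map (rename_Y \<psi>) (y_word as)) \<subseteq># mset (y_word bs)"
proof -
  obtain \<psi> where mono: "strict_mono_on {..<length as} \<psi>"
    and le: "\<forall>i<length as. \<psi> i < length bs \<and> as ! i \<le> bs ! (\<psi> i)"
    using assms unfolding seq_le_def by blast
  have renamed: "map (rename_Y \<psi>) (y_word as)
      = concat (map (\<lambda>k. replicate (as ! k) (Y (\<psi> k))) [0..<length as])"
    by (simp add: y_word_def rename_Y_def map_concat comp_def map_replicate)
  have "(\<Sum>k<length as. if Y (\<psi> k) = x then as ! k else 0)
      \<le> (\<Sum>j<length bs. if Y j = x then bs ! j else 0)" for x
  proof -
    have "(\<Sum>k<length as. if Y (\<psi> k) = x then as ! k else 0)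
        \<le> (\<Sum>k<length as. if Y (\<psi> k) = x then bs ! (\<psi> k) else 0)"
      using le by (intro sum_mono) auto
    also have "\<dots> = (\<Sum>j\<in>\<psi> ` {..<length as}. if Y j = x then bs ! j else 0)"
      using strict_mono_on_imp_inj_on[OF mono] by (simp add: sum.reindex)
    also have "\<dots> \<le> (\<Sum>j<length bs. if Y j = x then bs ! j else 0)"
      using le by (intro sum_mono2) auto
    finally show ?thesis .
  qed
  then have "mset (concat (map (\<lambda>k. replicate (as ! k) (Y (\<psi> k))) [0..<length as]))
      \<subseteq># mset (y_word bs)"
    unfolding subseteq_mset_def y_word_def count_mset_concat_replicate by blast
  then show ?thesis using that[of \<psi>] by (simp only: renamed)
qed

theorem mainTheorem4:
  assumes "infinite (UNIV :: 'a::field set)"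
    and "in_B_seq as" and "in_B_seq bs"
    and "seq_le as bs"
  shows "(comm_B bs :: 'a ncpoly) \<in> T_ideal_gen (insert (comm_B as) UT2_ids)"
  unfolding T_ideal_gen_def
proof (rule InterI)
  fix J :: "'a ncpoly set"
  assume "J \<in> {J. T_ideal J \<and> insert (comm_B as) UT2_ids \<subseteq> J}"
  then have J: "T_ideal J" and f: "comm_B as \<in> J" and I: "UT2_ids \<subseteq> J" by auto
  obtain \<psi> where "mset (map (rename_Y \<psi>) (y_word as)) \<subseteq># mset (y_word bs)"
    using seq_le_imp_renamed_y_word_subseteq[OF assms(4)] .
  then obtain rs where perm: "mset (y_word bs) = mset (map (rename_Y \<psi>) (y_word as) @ rs)"
    by (metis mset_subset_eq_exists_conv ex_mset mset_append)
  let ?h = "left_normed (Z 0) (map (rename_Y \<psi>) (y_word as) @ rs) :: 'a ncpoly"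
  have "nc_subst (\<lambda>x. nc_var (rename_Y \<psi> x)) (comm_B as) \<in> J"
    by (rule T_ideal_renaming[OF J f]) (auto simp: rename_Y_def)
  then have "?h \<in> J"
    unfolding comm_B_eq_left_normed nc_subst_renaming_left_normed left_normed_append
    by (intro T_ideal_foldl_lie_br[OF J]) simp
  moreover have "(\<lambda>w. comm_B bs w - ?h w) \<in> J"
    using I left_normed_perm_diff_in_UT2_ids[OF perm y_word_only_Y]
    by (auto simp: comm_B_eq_left_normed)
  ultimately show "comm_B bs \<in> J"
    using T_ideal_add_closed[OF J] by fastforce
qed

end
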